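(* Under the joint threshold-based policy with thresholds $P_S,P_D$, when $D$ knows that $S$ uses this policy with threshold $P_S$, $$\Psi(P_S,P_D)=\min\Big(1,\frac{\lambda_S}{[1-p(P_{tx})]P_S},\frac{\lambda_D}{[1-p(P_{tx})]P_D}\Big),\qquad P_{tx}=\frac{P_S-P_{C,S}}{1+\alpha}.$$
   Context: Time slotted, $t=1,2,\dots$ (energy and power identified). $S$ and $D$ harvest $E_S^t,E_D^t\ge0$; $\{E_S^t\},\{E_D^t\}$ stationary ergodic with means $\lambda_S,\lambda_D>0$. Infinite batteries, $B_\beta^1=0$. Block Rayleigh fading, $|h_t|^2$ i.i.d. exponential of mean 1, independent of energy arrivals; $D$ knows $h_t$. Rate $R>0$, noise $z>0$, $\alpha>0$, circuit power $P_{C,S}\ge0$, $P_S>P_{C,S}$; outage probability $p(P_{tx})=1-\exp(-(2^R-1)z/P_{tx})$. Joint threshold-based policy with full battery-state and policy information shared: in slot $t$, if $B_S^t\ge P_S$, $B_D^t\ge P_D$ and the channel is not in outage (i.e. $|h_t|^2\ge(2^R-1)z/P_{tx}$), $S$ consumes $P_S$ and $D$ consumes $P_D$; otherwise both consume $0$. $\Psi(P_S,P_D)=\lim_{n\to\infty}\frac1n\sum_{t=1}^n\mathbf{E}[\mathbf{1}_{B_S^t\ge P_S,\,B_D^t\ge P_D}]$. *)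

theory Defs
  imports "HOL-Probability.Probability"
begin

abbreviation path_space :: "(nat \<Rightarrow> real) measure" where
  "path_space \<equiv> Pi\<^sub>M UNIV (\<lambda>_. borel)"

definition stationary_process :: "'a measure \<Rightarrow> (nat \<Rightarrow> 'a \<Rightarrow> real) \<Rightarrow> bool" where
  "stationary_process M X \<longleftrightarrow>
     (\<forall>t. X t \<in> borel_measurable M) \<and>
     (\<forall>k. distr M path_space (\<lambda>\<omega> t. X (t + k) \<omega>) = distr M path_space (\<lambda>\<omega> t. X t \<omega>))"

definition ergodic_process :: "'a measure \<Rightarrow> (nat \<Rightarrow> 'a \<Rightarrow> real) \<Rightarrow> bool" where
  "ergodic_process M X \<longleftrightarrow>
     (\<forall>A \<in> sets path_space. (\<forall>x. x \<in> A \<longleftrightarrow> (\<lambda>t. x (Suc t)) \<in> A) \<longrightarrow>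
        measure M {\<omega> \<in> space M. (\<lambda>t. X t \<omega>) \<in> A} \<in> {0, 1})"

definition stationary_ergodic :: "'a measure \<Rightarrow> (nat \<Rightarrow> 'a \<Rightarrow> real) \<Rightarrow> bool" where
  "stationary_ergodic M X \<longleftrightarrow> stationary_process M X \<and> ergodic_process M X"

definition outage_prob :: "real \<Rightarrow> real \<Rightarrow> real \<Rightarrow> real" where
  "outage_prob R z Ptx = 1 - exp (- ((2 powr R - 1) * z / Ptx))"

definition tx_power :: "real \<Rightarrow> real \<Rightarrow> real \<Rightarrow> real" where
  "tx_power PS PCS \<alpha> = (PS - PCS) / (1 + \<alpha>)"

text \<open>Battery states (B_S^{t+1}, B_D^{t+1}) under the joint threshold policy; index t = 0 here
  corresponds to slot 1 of the paper. ES, ED are harvested energies, g t = |h_t|^2,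
  thr is the non-outage threshold (2^R-1) z / P_tx.\<close>
fun batteries :: "real \<Rightarrow> real \<Rightarrow> real \<Rightarrow> (nat \<Rightarrow> real) \<Rightarrow> (nat \<Rightarrow> real) \<Rightarrow> (nat \<Rightarrow> real)
                   \<Rightarrow> nat \<Rightarrow> real \<times> real" where
  "batteries PS PD thr ES ED g 0 = (0, 0)"
| "batteries PS PD thr ES ED g (Suc t) =
     (let (bs, bd) = batteries PS PD thr ES ED g t;
          act = (bs \<ge> PS \<and> bd \<ge> PD \<and> g t \<ge> thr)
      in (bs + ES t - (if act then PS else 0), bd + ED t - (if act then PD else 0)))"

end

theory Submission
  imports Defs "HOL-Library.Discrete_Functions"
begin

text \<open>
  Let \<open>K\<^sub>n\<close> count the slots before \<open>n\<close> in which both thresholds are met and \<open>N\<^sub>n\<close> the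
  transmissions among them. The batteries are \<open>\<Sum>E\<^sub>S - P\<^sub>S N\<^sub>n \<ge> 0\<close> and \<open>\<Sum>E\<^sub>D - P\<^sub>D N\<^sub>n \<ge> 0\<close>.
  Birkhoff's ergodic theorem gives \<open>\<Sum>E\<^sub>\<beta> / n \<rightarrow> \<lambda>\<^sub>\<beta>\<close> almost surely, and since the channel
  in slot \<open>t\<close> is independent of everything that decides whether slot \<open>t\<close> is ready,
  \<open>N\<^sub>n - q K\<^sub>n\<close> is a sum of bounded orthogonal increments, hence \<open>o(n)\<close> almost surely, where
  \<open>q = 1 - p(P\<^sub>t\<^sub>x)\<close>. Energy conservation then bounds \<open>K\<^sub>n / n\<close> from above by
  \<open>1\<close>, \<open>\<lambda>\<^sub>S / (q P\<^sub>S)\<close> and \<open>\<lambda>\<^sub>D / (q P\<^sub>D)\<close>; conversely, at the last slot before \<open>n\<close> that is not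
  ready some battery is below its threshold, which forces \<open>K\<^sub>n / n\<close> up to the minimum of these
  bounds. Dominated convergence turns the almost sure limit of \<open>K\<^sub>n / n\<close> into the limit of
  \<open>\<Psi>\<close>.
\<close>

section \<open>Battery dynamics and the fluid limit\<close>

context
  fixes PS PD thr :: real and es ed h :: "nat \<Rightarrow> real"
begin

definition ready :: "nat \<Rightarrow> bool" where
  "ready t \<longleftrightarrow> PS \<le> fst (batteries PS PD thr es ed h t) \<and> PD \<le> snd (batteries PS PD thr es ed h t)"

definition transmissions :: "nat \<Rightarrow> real" where
  "transmissions n = (\<Sum>t<n. of_bool (ready t \<and> thr \<le> h t))"

lemma batteries_eq:
  "batteries PS PD thr es ed h n =
     ((\<Sum>t<n. es t) - PS * transmissions n, (\<Sum>t<n. ed t) - PD * transmissions n)"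
  by (induction n) (simp_all add: transmissions_def ready_def split_beta Let_def algebra_simps)

lemma batteries_cong:
  assumes "\<And>k. k < t \<Longrightarrow> h k = h' k"
  shows "batteries PS PD thr es ed h' t = batteries PS PD thr es ed h t"
  using assms by (induction t) (simp_all add: split_beta Let_def)

lemma batteries_nonneg:
  assumes "\<And>t. 0 \<le> es t" "\<And>t. 0 \<le> ed t"
  shows "0 \<le> fst (batteries PS PD thr es ed h n) \<and> 0 \<le> snd (batteries PS PD thr es ed h n)"
proof (induction n)
  case (Suc n)
  then show ?case using assms[of n] by (auto simp: split_beta Let_def)
qed simp

end

lemma sum_of_bool_lower_bound:
  fixes A :: "nat \<Rightarrow> bool" and a C :: real
  assumes "a \<le> 1" "0 \<le> C"
    and fail: "\<And>m. \<not> A m \<Longrightarrow> a * m - C \<le> (\<Sum>t<m. of_bool (A t))"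
  shows "a * n - C - 1 \<le> (\<Sum>t<n. of_bool (A t))"
proof (induction n)
  case 0
  then show ?case using \<open>0 \<le> C\<close> by simp
next
  case (Suc n)
  show ?case
  proof (cases "A n")
    case True
    then show ?thesis using Suc \<open>a \<le> 1\<close> by (simp add: algebra_simps)
  next
    case False
    then show ?thesis using fail[of n] \<open>a \<le> 1\<close> by (simp add: algebra_simps)
  qed
qed

lemma eventually_imp_uniform_bound:
  fixes f g :: "nat \<Rightarrow> real"
  assumes "eventually (\<lambda>m. P m \<longrightarrow> f m \<le> g m) sequentially"
  shows "\<exists>C\<ge>0. \<forall>m. P m \<longrightarrow> f m - C \<le> g m"
proof -
  obtain n0 where n0: "\<And>m. n0 \<le> m \<Longrightarrow> P m \<longrightarrow> f m \<le> g m"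
    using assms by (auto simp: eventually_sequentially)
  define C where "C = (\<Sum>m<n0. \<bar>f m - g m\<bar>)"
  have C: "C \<ge> 0" by (simp add: C_def sum_nonneg)
  have "f m - g m \<le> C" if "m < n0" for m
    unfolding C_def using that
    by (intro order.trans[OF abs_ge_self member_le_sum[of m "{..<n0}"]]) auto
  then have "P m \<longrightarrow> f m - C \<le> g m" for m
    using n0[of m] C by (cases "m < n0") force+
  with C show ?thesis by blast
qed

text \<open>\<open>K\<close> counts the slots in which both thresholds are met, \<open>N\<close> the transmissions, and
  \<open>xS\<close>, \<open>xD\<close> the harvested energies in units of \<open>P\<^sub>S\<close>, \<open>P\<^sub>D\<close>.\<close>
context
  fixes K N xS xD :: "nat \<Rightarrow> real" and A :: "nat \<Rightarrow> bool" and q aS aD :: real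
  assumes K_def: "\<And>n. K n = (\<Sum>t<n. of_bool (A t))"
    and budgetS: "\<And>n. N n \<le> xS n" and budgetD: "\<And>n. N n \<le> xD n"
    and fail: "\<And>m. \<not> A m \<Longrightarrow> xS m < N m + 1 \<or> xD m < N m + 1"
    and limS: "(\<lambda>n. xS n / n) \<longlonglongrightarrow> aS" and limD: "(\<lambda>n. xD n / n) \<longlonglongrightarrow> aD"
    and lim_err: "(\<lambda>n. (N n - q * K n) / n) \<longlonglongrightarrow> 0" and q_pos: "q > 0"
begin

lemma budget_frequency_eventually_less:
  assumes "min 1 (min (aS / q) (aD / q)) < a"
  shows "eventually (\<lambda>n. K n / n < a) sequentially"
proof -
  define e where "e n = (N n - q * K n) / n" for n
  define u where "u n = min 1 (min ((xS n / n - e n) / q) ((xD n / n - e n) / q))" for n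
  have "K n \<le> n" for n
    unfolding K_def by (rule order.trans[OF sum_mono[of _ _ "\<lambda>_. 1"]]) auto
  then have upper: "K n / n \<le> u n" for n
    using budgetS[of n] budgetD[of n] q_pos
    by (cases "n = 0") (auto simp: u_def e_def K_def field_simps)
  have "u \<longlonglongrightarrow> min 1 (min ((aS - 0) / q) ((aD - 0) / q))"
    using lim_err unfolding u_def e_def[abs_def]
    by (intro tendsto_intros limS limD) (use q_pos in auto)
  then have "eventually (\<lambda>n. u n < a) sequentially"
    using assms order_tendstoD(2) by fastforce
  then show ?thesis by eventually_elim (rule le_less_trans[OF upper])
qed

lemma budget_failures_eventually_large:
  assumes "a < min (aS / q) (aD / q)"
  shows "eventually (\<lambda>m. \<not> A m \<longrightarrow> a * m \<le> K m) sequentially"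
proof -
  define e where "e n = (N n - q * K n) / n" for n
  define l where "l n = min ((xS n / n - 1 / n - e n) / q) ((xD n / n - 1 / n - e n) / q)" for n
  have "l \<longlonglongrightarrow> min ((aS - 0 - 0) / q) ((aD - 0 - 0) / q)"
    using lim_err unfolding l_def e_def[abs_def]
    by (intro tendsto_intros limS limD lim_inverse_n') (use q_pos in auto)
  then have "eventually (\<lambda>m. a < l m) sequentially"
    using assms order_tendstoD(1) by fastforce
  then show ?thesis
    using eventually_gt_at_top[of 0]
  proof eventually_elim
    case (elim m)
    have "(x / m - 1 / m - e m) / q < K m / m" if "x < N m + 1" for x
    proof -
      have "(x / m - 1 / m - e m) / q = (x - 1 - N m + q * K m) / (q * m)"
        using elim q_pos by (simp add: e_def field_simps)
      also have "\<dots> < q * K m / (q * m)"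
        using that elim q_pos by (intro divide_strict_right_mono) auto
      finally show ?thesis using q_pos by simp
    qed
    then have "\<not> A m \<Longrightarrow> l m < K m / m"
      using fail[of m] by (auto simp: l_def min_less_iff_disj)
    then have "\<not> A m \<Longrightarrow> l m * m < K m" using elim by (simp add: pos_less_divide_eq)
    moreover have "a * m < l m * m" using elim by simp
    ultimately show ?case by auto
  qed
qed

text \<open>Between the last failure before \<open>n\<close> and \<open>n\<close> the count grows at full rate, and at a
  failure the exhausted budget forces \<open>K\<close> to be of order \<open>min (aS / q) (aD / q)\<close>.\<close>
lemma budget_frequency_eventually_greater:
  assumes "a < min 1 (min (aS / q) (aD / q))"
  shows "eventually (\<lambda>n. a < K n / n) sequentially"
proof -
  define c where "c = min 1 (min (aS / q) (aD / q))"
  define a' where "a' = (a + c) / 2"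
  have "a < a'" "a' < c" using assms[folded c_def] unfolding a'_def by auto
  moreover have "c \<le> 1" "c \<le> min (aS / q) (aD / q)" unfolding c_def by auto
  ultimately have "a < a'" "a' \<le> 1" "a' < min (aS / q) (aD / q)" by auto
  then obtain C where "C \<ge> 0" and "\<And>m. \<not> A m \<Longrightarrow> a' * m - C \<le> K m"
    using eventually_imp_uniform_bound[OF budget_failures_eventually_large] by blast
  then have K_ge: "a' * n - C - 1 \<le> K n" for n
    unfolding K_def using \<open>a' \<le> 1\<close> by (intro sum_of_bool_lower_bound) (auto simp: K_def)
  have "(\<lambda>n. a' - (C + 1) / n) \<longlonglongrightarrow> a' - 0"
    by (intro tendsto_intros tendsto_divide_0[OF tendsto_const] filterlim_real_sequentially)
  then have "eventually (\<lambda>n. a < a' - (C + 1) / n) sequentially"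
    using \<open>a < a'\<close> order_tendstoD(1) by fastforce
  then show ?thesis
    using eventually_gt_at_top[of 0]
  proof eventually_elim
    case (elim n)
    then have "a' - (C + 1) / n = (a' * n - C - 1) / n" by (simp add: field_simps)
    also have "\<dots> \<le> K n / n" using K_ge[of n] by (intro divide_right_mono) auto
    finally show ?case using elim by linarith
  qed
qed

theorem budget_frequency_limit: "(\<lambda>n. K n / n) \<longlonglongrightarrow> min 1 (min (aS / q) (aD / q))"
  by (rule order_tendstoI) (use budget_frequency_eventually_greater budget_frequency_eventually_less in auto)

end

theorem ready_frequency_limit:
  assumes es: "\<And>t. 0 \<le> es t" and ed: "\<And>t. 0 \<le> ed t" and "PS > 0" "PD > 0" "q > 0"
    and lim_es: "(\<lambda>n. (\<Sum>t<n. es t) / n) \<longlonglongrightarrow> lS" and lim_ed: "(\<lambda>n. (\<Sum>t<n. ed t) / n) \<longlonglongrightarrow> lD"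
    and lim_tx: "(\<lambda>n. (transmissions PS PD thr es ed h n
                          - q * (\<Sum>t<n. of_bool (ready PS PD thr es ed h t))) / n) \<longlonglongrightarrow> 0"
  shows "(\<lambda>n. (\<Sum>t<n. of_bool (ready PS PD thr es ed h t)) / n)
           \<longlonglongrightarrow> min 1 (min (lS / (q * PS)) (lD / (q * PD)))"
proof -
  let ?N = "transmissions PS PD thr es ed h" and ?B = "batteries PS PD thr es ed h"
  have "(\<lambda>n. (\<Sum>t<n. of_bool (ready PS PD thr es ed h t)) / n) \<longlonglongrightarrow> min 1 (min (lS / PS / q) (lD / PD / q))"
  proof (rule budget_frequency_limit[where xS = "\<lambda>n. (\<Sum>t<n. es t) / PS" and xD = "\<lambda>n. (\<Sum>t<n. ed t) / PD"])
    fix n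
    have "0 \<le> fst (?B n) \<and> 0 \<le> snd (?B n)" by (rule batteries_nonneg[OF es ed])
    then show "?N n \<le> (\<Sum>t<n. es t) / PS" "?N n \<le> (\<Sum>t<n. ed t) / PD"
      using \<open>PS > 0\<close> \<open>PD > 0\<close> by (auto simp: batteries_eq field_simps)
  next
    show "(\<Sum>t<m. es t) / PS < ?N m + 1 \<or> (\<Sum>t<m. ed t) / PD < ?N m + 1"
      if "\<not> ready PS PD thr es ed h m" for m
      using that \<open>PS > 0\<close> \<open>PD > 0\<close> by (auto simp: ready_def batteries_eq field_simps)
    show "(\<lambda>n. (\<Sum>t<n. es t) / PS / n) \<longlonglongrightarrow> lS / PS"
      using tendsto_divide[OF lim_es tendsto_const, of PS] \<open>PS > 0\<close>
      by (simp add: divide_divide_eq_left mult.commute)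
    show "(\<lambda>n. (\<Sum>t<n. ed t) / PD / n) \<longlonglongrightarrow> lD / PD"
      using tendsto_divide[OF lim_ed tendsto_const, of PD] \<open>PD > 0\<close>
      by (simp add: divide_divide_eq_left mult.commute)
  qed (use lim_tx \<open>q > 0\<close> in simp_all)
  then show ?thesis by (simp add: field_simps)
qed

section \<open>Birkhoff's ergodic theorem on path space\<close>

lemma average_tendstoI:
  fixes S :: "nat \<Rightarrow> real" and L :: real
  assumes "\<And>\<delta>. \<delta> > 0 \<Longrightarrow> eventually (\<lambda>n. \<bar>S n - real n * L\<bar> \<le> \<delta> * real n) sequentially"
  shows "(\<lambda>n. S n / n) \<longlonglongrightarrow> L"
proof (rule tendsto_iff[THEN iffD2], intro allI impI)
  fix r :: real assume "r > 0"
  have "eventually (\<lambda>n. \<bar>S n - real n * L\<bar> \<le> r / 2 * real n) sequentially"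
    using \<open>r > 0\<close> by (intro assms) simp
  then show "eventually (\<lambda>n. dist (S n / n) L < r) sequentially"
    using eventually_gt_at_top[of 0]
  proof eventually_elim
    case (elim n)
    then have "\<bar>S n / n - L\<bar> = \<bar>S n - n * L\<bar> / n" by (simp add: field_simps)
    also have "\<dots> \<le> r / 2" using elim by (simp add: divide_le_eq)
    finally show ?case using \<open>r > 0\<close> by (simp add: dist_real_def)
  qed
qed

lemma eventually_le_real_mult:
  assumes "d > 0"
  shows "eventually (\<lambda>n. C \<le> real n * d) sequentially"
proof -
  obtain N :: nat where "C / d \<le> N" using real_arch_simple by blast
  then have "C \<le> real n * d" if "N \<le> n" for n
    using that \<open>d > 0\<close> by (auto simp: divide_le_eq intro: order.trans[OF _ mult_right_mono])
  then show ?thesis by (auto simp: eventually_sequentially)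
qed

lemma frequently_sequentially_Suc:
  "frequently (\<lambda>n. P (Suc n)) sequentially \<longleftrightarrow> frequently P sequentially"
  unfolding frequently_def using eventually_sequentially_Suc[of "\<lambda>n. \<not> P n"] by simp

lemma frequently_below_Suc_iff:
  fixes S T :: "nat \<Rightarrow> real" and a c :: real
  assumes S: "\<And>n. S (Suc n) = c + T n"
  shows "(\<exists>b::rat. of_rat b < a \<and> (\<exists>\<^sub>F n in sequentially. S n \<le> n * of_rat b)) \<longleftrightarrow>
         (\<exists>b::rat. of_rat b < a \<and> (\<exists>\<^sub>F n in sequentially. T n \<le> n * of_rat b))"
proof
  assume "\<exists>b::rat. of_rat b < a \<and> (\<exists>\<^sub>F n in sequentially. S n \<le> n * of_rat b)"
  then obtain b :: rat where "of_rat b < a" and "\<exists>\<^sub>F n in sequentially. S n \<le> n * of_rat b"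
    by blast
  then have freq: "\<exists>\<^sub>F n in sequentially. S (Suc n) \<le> real (Suc n) * of_rat b"
    using frequently_sequentially_Suc[of "\<lambda>n. S n \<le> real n * of_rat b"] by simp
  obtain b' :: rat where b': "of_rat b < (of_rat b' :: real)" "of_rat b' < a"
    using of_rat_dense[OF \<open>of_rat b < a\<close>] by blast
  have "\<forall>\<^sub>F n in sequentially. of_rat b - c \<le> real n * (of_rat b' - of_rat b)"
    using b'(1) by (intro eventually_le_real_mult) simp
  then have "\<exists>\<^sub>F n in sequentially. T n \<le> n * of_rat b'"
    by (rule frequently_rev_mp[OF freq, OF eventually_mono]) (simp add: S algebra_simps)
  with b' show "\<exists>b::rat. of_rat b < a \<and> (\<exists>\<^sub>F n in sequentially. T n \<le> n * of_rat b)" by blast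
next
  assume "\<exists>b::rat. of_rat b < a \<and> (\<exists>\<^sub>F n in sequentially. T n \<le> n * of_rat b)"
  then obtain b :: rat where "of_rat b < a" and freq: "\<exists>\<^sub>F n in sequentially. T n \<le> n * of_rat b"
    by blast
  obtain b' :: rat where b': "of_rat b < (of_rat b' :: real)" "of_rat b' < a"
    using of_rat_dense[OF \<open>of_rat b < a\<close>] by blast
  have "\<forall>\<^sub>F n in sequentially. c - of_rat b' \<le> real n * (of_rat b' - of_rat b)"
    using b'(1) by (intro eventually_le_real_mult) simp
  then have "\<exists>\<^sub>F n in sequentially. S (Suc n) \<le> real (Suc n) * of_rat b'"
    by (rule frequently_rev_mp[OF freq, OF eventually_mono]) (simp add: S algebra_simps)
  then have "\<exists>\<^sub>F n in sequentially. S n \<le> n * of_rat b'"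
    using frequently_sequentially_Suc[of "\<lambda>n. S n \<le> real n * of_rat b'"] by simp
  with b' show "\<exists>b::rat. of_rat b < a \<and> (\<exists>\<^sub>F n in sequentially. S n \<le> n * of_rat b)" by blast
qed

definition path_shift :: "nat \<Rightarrow> (nat \<Rightarrow> real) \<Rightarrow> nat \<Rightarrow> real" where
  "path_shift k x = (\<lambda>t. x (t + k))"

lemma measurable_path_shift[measurable]: "path_shift k \<in> path_space \<rightarrow>\<^sub>M path_space"
  unfolding path_shift_def by (rule measurable_PiM_single') (auto simp: space_PiM)

lemma path_shift_0[simp]: "path_shift 0 x = x"
  by (simp add: path_shift_def)

lemma path_shift_apply: "path_shift k x t = x (t + k)"
  by (simp add: path_shift_def)

definition shift_invariant :: "(nat \<Rightarrow> real) measure \<Rightarrow> bool" where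
  "shift_invariant P \<longleftrightarrow> distr P path_space (path_shift 1) = P"

definition shift_ergodic :: "(nat \<Rightarrow> real) measure \<Rightarrow> bool" where
  "shift_ergodic P \<longleftrightarrow>
     (\<forall>A \<in> sets path_space. (\<forall>x. x \<in> A \<longleftrightarrow> path_shift 1 x \<in> A) \<longrightarrow> measure P A \<in> {0, 1})"

lemma sum_path_shift_Suc:
  "(\<Sum>k<Suc n. f (path_shift k x)) = f x + (\<Sum>k<n. f (path_shift k (path_shift 1 x)))"
  by (subst sum.lessThan_Suc_shift) (simp add: path_shift_def del: sum.lessThan_Suc)

lemma distr_path_shift:
  assumes sets_P: "sets P = sets path_space" and inv: "shift_invariant P"
  shows "distr P path_space (path_shift k) = P"
proof (induction k)
  case 0
  have "distr P path_space (\<lambda>x. x) = distr P P (\<lambda>x. x)"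
    by (intro distr_cong) (auto simp: sets_P)
  then show ?case by simp
next
  case (Suc k)
  have "path_shift (Suc k) = path_shift k \<circ> path_shift 1"
    by (simp add: path_shift_def fun_eq_iff)
  then have "distr P path_space (path_shift (Suc k)) = distr P path_space (path_shift k \<circ> path_shift 1)"
    by simp
  also have "\<dots> = distr (distr P path_space (path_shift 1)) path_space (path_shift k)"
    by (intro distr_distr[symmetric]) (auto simp: measurable_cong_sets[OF sets_P refl])
  finally show ?case using inv Suc by (simp add: shift_invariant_def)
qed

lemma measurable_eq_path_space: "sets P = sets path_space \<Longrightarrow> measurable P = measurable path_space"
  by (intro ext measurable_cong_sets) auto

fun max_partial_sum :: "((nat \<Rightarrow> real) \<Rightarrow> real) \<Rightarrow> nat \<Rightarrow> (nat \<Rightarrow> real) \<Rightarrow> real" where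
  "max_partial_sum f 0 x = 0"
| "max_partial_sum f (Suc n) x = max (max_partial_sum f n x) (\<Sum>k<Suc n. f (path_shift k x))"

lemma max_partial_sum_nonneg: "0 \<le> max_partial_sum f n x"
  by (induction n) auto

lemma partial_sum_le_max_partial_sum: "m \<le> n \<Longrightarrow> (\<Sum>k<m. f (path_shift k x)) \<le> max_partial_sum f n x"
  by (induction n) (auto simp del: sum.lessThan_Suc simp: le_Suc_eq)

lemma max_partial_sum_le_shift: "max_partial_sum f n x \<le> max 0 (f x + max_partial_sum f n (path_shift 1 x))"
proof (induction n)
  case (Suc n)
  have "max_partial_sum f n (path_shift 1 x) \<le> max_partial_sum f (Suc n) (path_shift 1 x)"
    by (simp del: sum.lessThan_Suc)
  moreover have "(\<Sum>k<n. f (path_shift k (path_shift 1 x))) \<le> max_partial_sum f (Suc n) (path_shift 1 x)"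
    by (rule partial_sum_le_max_partial_sum) simp
  ultimately show ?case using Suc by (auto simp: sum_path_shift_Suc simp del: sum.lessThan_Suc)
qed simp

lemma max_partial_sum_pos_iff: "0 < max_partial_sum f n x \<longleftrightarrow> (\<exists>m\<le>n. 0 < (\<Sum>k<m. f (path_shift k x)))"
  by (induction n) (auto simp del: sum.lessThan_Suc simp: le_Suc_eq less_max_iff_disj)

lemma max_partial_sum_le_abs: "max_partial_sum f n x \<le> (\<Sum>k<n. \<bar>f (path_shift k x)\<bar>)"
proof (induction n)
  case (Suc n)
  have "(\<Sum>k<Suc n. f (path_shift k x)) \<le> (\<Sum>k<Suc n. \<bar>f (path_shift k x)\<bar>)"
    by (intro sum_mono) simp
  then show ?case using Suc by (simp del: sum.lessThan_Suc) simp
qed simp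

lemma max_partial_sum_measurable[measurable]:
  assumes [measurable]: "f \<in> borel_measurable path_space"
  shows "max_partial_sum f n \<in> borel_measurable path_space"
  by (induction n) simp_all


lemma integrable_path_shift:
  fixes u :: "(nat \<Rightarrow> real) \<Rightarrow> real"
  assumes sets_P: "sets P = sets path_space" and inv: "shift_invariant P" and u: "integrable P u"
  shows "integrable P (\<lambda>x. u (path_shift k x))"
proof -
  have "u \<in> borel_measurable path_space"
    using borel_measurable_integrable[OF u] by (simp add: measurable_eq_path_space[OF sets_P])
  then show ?thesis
    using u integrable_distr_eq[of "path_shift k" P path_space u] distr_path_shift[OF sets_P inv]
    by (simp add: measurable_eq_path_space[OF sets_P])
qed

lemma integrable_max_partial_sum:
  fixes f :: "(nat \<Rightarrow> real) \<Rightarrow> real"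
  assumes sets_P: "sets P = sets path_space" and inv: "shift_invariant P" and f: "integrable P f"
  shows "integrable P (max_partial_sum f n)"
proof (rule Bochner_Integration.integrable_bound)
  show "integrable P (\<lambda>x. \<Sum>k<n. \<bar>f (path_shift k x)\<bar>)"
    using integrable_path_shift[OF sets_P inv integrable_abs[OF f]] by auto
  show "AE x in P. norm (max_partial_sum f n x) \<le> norm (\<Sum>k<n. \<bar>f (path_shift k x)\<bar>)"
    using max_partial_sum_le_abs[of f n] max_partial_sum_nonneg[of f n]
    by (auto intro!: AE_I2 simp: sum_nonneg)
  show "max_partial_sum f n \<in> borel_measurable P"
    using borel_measurable_integrable[OF f] by (simp add: measurable_eq_path_space[OF sets_P])
qed

text \<open>Garsia's proof: on \<open>{max_partial_sum f n > 0}\<close> the function \<open>f\<close> dominates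
  \<open>max_partial_sum f n - max_partial_sum f n \<circ> path_shift 1\<close>, whose integral vanishes by invariance.\<close>
lemma integral_max_partial_sum_pos:
  fixes f :: "(nat \<Rightarrow> real) \<Rightarrow> real"
  assumes sets_P: "sets P = sets path_space" and inv: "shift_invariant P" and f: "integrable P f"
  shows "0 \<le> (\<integral>x. (if 0 < max_partial_sum f n x then f x else 0) \<partial>P)"
proof -
  note meq = measurable_eq_path_space[OF sets_P]
  note int_M = integrable_max_partial_sum[OF sets_P inv f]
  have [measurable]: "f \<in> borel_measurable path_space"
    using borel_measurable_integrable[OF f] by (simp add: meq)
  have "(\<integral>x. max_partial_sum f n x - max_partial_sum f n (path_shift 1 x) \<partial>P)
      \<le> (\<integral>x. (if 0 < max_partial_sum f n x then f x else 0) \<partial>P)"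
  proof (rule integral_mono)
    show "integrable P (\<lambda>x. if 0 < max_partial_sum f n x then f x else 0)"
      by (rule Bochner_Integration.integrable_bound[OF f]) (auto simp: meq intro!: AE_I2)
    show "max_partial_sum f n x - max_partial_sum f n (path_shift 1 x)
        \<le> (if 0 < max_partial_sum f n x then f x else 0)" for x
      using max_partial_sum_le_shift[of f n x] max_partial_sum_nonneg[of f n x]
        max_partial_sum_nonneg[of f n "path_shift 1 x"] by auto
  qed (use int_M integrable_path_shift[OF sets_P inv int_M] in simp)
  moreover have "(\<integral>x. max_partial_sum f n (path_shift 1 x) \<partial>P) = (\<integral>x. max_partial_sum f n x \<partial>P)"
    using integral_distr[of "path_shift 1" P path_space "max_partial_sum f n"] inv
    by (simp add: meq shift_invariant_def)
  ultimately show ?thesis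
    using int_M integrable_path_shift[OF sets_P inv int_M[of n], of 1]
    by (simp add: Bochner_Integration.integral_diff)
qed

lemma maximal_ergodic_lemma:
  fixes f :: "(nat \<Rightarrow> real) \<Rightarrow> real"
  assumes sets_P: "sets P = sets path_space" and "finite_measure P"
    and inv: "shift_invariant P" and f: "integrable P f"
  shows "0 \<le> (\<integral>x. (if \<exists>n. 0 < (\<Sum>k<n. f (path_shift k x)) then f x else 0) \<partial>P)"
proof -
  note meq = measurable_eq_path_space[OF sets_P]
  have [measurable]: "f \<in> borel_measurable path_space"
    using borel_measurable_integrable[OF f] by (simp add: meq)
  have "eventually (\<lambda>n. 0 < max_partial_sum f n x \<longleftrightarrow> (\<exists>n. 0 < (\<Sum>k<n. f (path_shift k x)))) sequentially"
    for x
  proof (cases "\<exists>n. 0 < (\<Sum>k<n. f (path_shift k x))")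
    case True
    then obtain m where "0 < (\<Sum>k<m. f (path_shift k x))" by blast
    then show ?thesis
      using True by (auto simp: eventually_sequentially max_partial_sum_pos_iff intro!: exI[of _ m])
  qed (simp add: max_partial_sum_pos_iff)
  then have "(\<lambda>n. if 0 < max_partial_sum f n x then f x else 0)
      \<longlonglongrightarrow> (if \<exists>n. 0 < (\<Sum>k<n. f (path_shift k x)) then f x else 0)" for x
    by (rule tendsto_eventually[OF eventually_mono]) auto
  then have "(\<lambda>n. \<integral>x. (if 0 < max_partial_sum f n x then f x else 0) \<partial>P)
      \<longlonglongrightarrow> (\<integral>x. (if \<exists>n. 0 < (\<Sum>k<n. f (path_shift k x)) then f x else 0) \<partial>P)"
    using f by (intro integral_dominated_convergence[where w = "\<lambda>x. norm (f x)"]) (auto simp: meq)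
  then show ?thesis
    using integral_max_partial_sum_pos[OF sets_P inv f] by (intro LIMSEQ_le_const) auto
qed

text \<open>\<open>x \<in> below_average_set f a\<close> says that the averages of \<open>f\<close> along the orbit of \<open>x\<close> have
  \<open>lim inf < a\<close>; quantifying over rational witnesses keeps the set measurable.\<close>
definition below_average_set :: "((nat \<Rightarrow> real) \<Rightarrow> real) \<Rightarrow> real \<Rightarrow> (nat \<Rightarrow> real) set" where
  "below_average_set f a =
     {x. \<exists>b::rat. of_rat b < a \<and> (\<exists>\<^sub>F n in sequentially. (\<Sum>k<n. f (path_shift k x)) \<le> n * of_rat b)}"

lemma below_average_set_sets:
  assumes [measurable]: "f \<in> borel_measurable path_space"
  shows "below_average_set f a \<in> sets path_space"
proof -
  have "{x \<in> space path_space. \<exists>b::rat. of_rat b < a \<and>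
      (\<forall>N. \<exists>n\<ge>N. (\<Sum>k<n. f (path_shift k x)) \<le> n * of_rat b)} \<in> sets path_space"
    by measurable
  then show ?thesis by (simp add: below_average_set_def frequently_sequentially space_PiM)
qed

lemma below_average_set_shift:
  "path_shift k x \<in> below_average_set f a \<longleftrightarrow> x \<in> below_average_set f a"
proof (induction k arbitrary: x)
  case (Suc k)
  have "path_shift (Suc k) x = path_shift k (path_shift 1 x)" by (simp add: path_shift_def)
  then have "path_shift (Suc k) x \<in> below_average_set f a \<longleftrightarrow> path_shift 1 x \<in> below_average_set f a"
    using Suc by simp
  also have "\<dots> \<longleftrightarrow> x \<in> below_average_set f a"
    unfolding below_average_set_def mem_Collect_eq
    by (rule frequently_below_Suc_iff[symmetric]) (rule sum_path_shift_Suc)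
  finally show ?case .
qed simp

lemma exists_partial_sum_pos_iff_below_average:
  "(\<exists>n. 0 < (\<Sum>k<n. if path_shift k x \<in> below_average_set f a then a - f (path_shift k x) else 0))
     \<longleftrightarrow> x \<in> below_average_set f a"
proof
  assume x: "x \<in> below_average_set f a"
  then obtain b :: rat where b: "of_rat b < a"
    and "\<exists>\<^sub>F n in sequentially. (\<Sum>k<n. f (path_shift k x)) \<le> n * of_rat b"
    unfolding below_average_set_def by blast
  then obtain n where "n \<ge> 1" and "(\<Sum>k<n. f (path_shift k x)) \<le> n * of_rat b"
    by (auto simp: frequently_sequentially)
  moreover have "real n * of_rat b < real n * a" using b \<open>n \<ge> 1\<close> by simp
  ultimately have "0 < n * a - (\<Sum>k<n. f (path_shift k x))" by linarith
  then show "\<exists>n. 0 < (\<Sum>k<n. if path_shift k x \<in> below_average_set f a then a - f (path_shift k x) else 0)"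
    using x by (intro exI[of _ n]) (simp add: below_average_set_shift sum_subtractf)
qed (cases "x \<in> below_average_set f a"; simp add: below_average_set_shift)

text \<open>By ergodicity the invariant set \<open>B = below_average_set f a\<close> has measure \<open>0\<close> or \<open>1\<close>;
  if it were \<open>1\<close>, the maximal ergodic lemma for \<open>(a - f)\<close> restricted to \<open>B\<close> would give
  \<open>a \<ge> \<integral>f\<close>.\<close>
lemma below_average_set_null:
  fixes f :: "(nat \<Rightarrow> real) \<Rightarrow> real"
  assumes sets_P: "sets P = sets path_space" and "prob_space P"
    and inv: "shift_invariant P" and erg: "shift_ergodic P"
    and f: "integrable P f" and a: "a < (\<integral>x. f x \<partial>P)"
  shows "measure P (below_average_set f a) = 0"
proof (rule ccontr)
  interpret prob_space P by fact
  let ?B = "below_average_set f a"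
  note meq = measurable_eq_path_space[OF sets_P]
  have [measurable]: "f \<in> borel_measurable path_space"
    using borel_measurable_integrable[OF f] by (simp add: meq)
  have B[measurable]: "?B \<in> sets path_space" by (rule below_average_set_sets) simp
  assume "measure P ?B \<noteq> 0"
  moreover have "\<forall>x. x \<in> ?B \<longleftrightarrow> path_shift 1 x \<in> ?B" using below_average_set_shift[of 1] by simp
  then have "measure P ?B \<in> {0, 1}" using erg B unfolding shift_ergodic_def by blast
  ultimately have "prob ?B = 1" by simp
  then have AE_B: "AE x in P. x \<in> ?B"
    using B by (subst AE_in_set_eq_1) (auto simp: sets_P)
  define h where "h x = (if x \<in> ?B then a - f x else 0)" for x
  have [measurable]: "h \<in> borel_measurable path_space" unfolding h_def by measurable
  have h: "integrable P h"
    by (rule Bochner_Integration.integrable_bound[where f = "\<lambda>x. \<bar>a\<bar> + \<bar>f x\<bar>"])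
      (use f in \<open>auto simp: meq h_def intro!: AE_I2\<close>)
  have "(if \<exists>n. 0 < (\<Sum>k<n. h (path_shift k x)) then h x else 0) = h x" for x
    using exists_partial_sum_pos_iff_below_average[where f = f and a = a and x = x] by (simp add: h_def)
  then have "0 \<le> (\<integral>x. h x \<partial>P)"
    using maximal_ergodic_lemma[OF sets_P finite_measure_axioms inv h] by simp
  also have "(\<integral>x. h x \<partial>P) = (\<integral>x. a - f x \<partial>P)"
    by (rule integral_cong_AE) (auto simp: meq h_def intro!: AE_mp[OF AE_B AE_I2])
  also have "\<dots> = a - (\<integral>x. f x \<partial>P)"
    using f prob_space by (simp add: Bochner_Integration.integral_diff)
  finally show False using a by simp
qed

lemma AE_not_below_average:
  fixes f :: "(nat \<Rightarrow> real) \<Rightarrow> real"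
  assumes sets_P: "sets P = sets path_space" and P: "prob_space P"
    and inv: "shift_invariant P" and erg: "shift_ergodic P"
    and f: "integrable P f" and a: "a < (\<integral>x. f x \<partial>P)"
  shows "AE x in P. x \<notin> below_average_set f a"
proof (rule AE_not_in)
  interpret prob_space P by fact
  have "f \<in> borel_measurable path_space"
    using borel_measurable_integrable[OF f] by (simp add: measurable_eq_path_space[OF sets_P])
  then have "below_average_set f a \<in> sets P"
    using below_average_set_sets[of f a] sets_P by simp
  then show "below_average_set f a \<in> null_sets P"
    using below_average_set_null[OF assms] by (intro null_setsI) (simp_all add: emeasure_eq_measure)
qed

lemma birkhoff_lower_bound:
  fixes f :: "(nat \<Rightarrow> real) \<Rightarrow> real"
  assumes sets_P: "sets P = sets path_space" and P: "prob_space P"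
    and inv: "shift_invariant P" and erg: "shift_ergodic P"
    and f: "integrable P f"
  shows "AE x in P. \<forall>\<delta>>0. eventually (\<lambda>n. real n * ((\<integral>x. f x \<partial>P) - \<delta>) \<le> (\<Sum>k<n. f (path_shift k x))) sequentially"
proof -
  define L where "L = (\<integral>x. f x \<partial>P)"
  have "AE x in P. of_rat a < L \<longrightarrow> x \<notin> below_average_set f (of_rat a)" for a :: rat
    using AE_not_below_average[OF assms, of "of_rat a"] by (cases "of_rat a < L") (auto simp: L_def)
  then have "AE x in P. \<forall>a::rat. of_rat a < L \<longrightarrow> x \<notin> below_average_set f (of_rat a)"
    by (subst AE_all_countable) (intro allI)
  then show ?thesis
  proof eventually_elim
    case (elim x)
    show ?case unfolding L_def[symmetric]
    proof (intro allI impI)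
      fix \<delta> :: real assume "\<delta> > 0"
      obtain a :: rat where a: "L - \<delta> < of_rat a" "of_rat a < L"
        using of_rat_dense[of "L - \<delta>" L] \<open>\<delta> > 0\<close> by auto
      obtain b :: rat where b: "L - \<delta> < of_rat b" "of_rat b < (of_rat a :: real)"
        using of_rat_dense[OF a(1)] by auto
      have "x \<notin> below_average_set f (of_rat a)" using elim a(2) by blast
      then have "eventually (\<lambda>n. n * of_rat b < (\<Sum>k<n. f (path_shift k x))) sequentially"
        using b(2) unfolding below_average_set_def mem_Collect_eq not_frequently[symmetric] not_le[symmetric]
        by blast
      then show "eventually (\<lambda>n. real n * (L - \<delta>) \<le> (\<Sum>k<n. f (path_shift k x))) sequentially"
      proof eventually_elim
        case (elim n)
        have "real n * (L - \<delta>) \<le> real n * of_rat b" using b(1) by (intro mult_left_mono) auto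
        with elim show ?case by linarith
      qed
    qed
  qed
qed

theorem birkhoff_ergodic:
  fixes f :: "(nat \<Rightarrow> real) \<Rightarrow> real"
  assumes sets_P: "sets P = sets path_space" and P: "prob_space P"
    and inv: "shift_invariant P" and erg: "shift_ergodic P" and f: "integrable P f"
  shows "AE x in P. (\<lambda>n. (\<Sum>k<n. f (path_shift k x)) / n) \<longlonglongrightarrow> (\<integral>x. f x \<partial>P)"
  using birkhoff_lower_bound[OF sets_P P inv erg f]
    birkhoff_lower_bound[OF sets_P P inv erg integrable_minus[OF f]]
proof eventually_elim
  case (elim x)
  show ?case
  proof (rule average_tendstoI)
    fix \<delta> :: real assume "\<delta> > 0"
    with elim have "eventually (\<lambda>n. real n * ((\<integral>x. f x \<partial>P) - \<delta>) \<le> (\<Sum>k<n. f (path_shift k x))) sequentially"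
      "eventually (\<lambda>n. real n * (- (\<integral>x. f x \<partial>P) - \<delta>) \<le> - (\<Sum>k<n. f (path_shift k x))) sequentially"
      by (simp_all add: sum_negf)
    then show "eventually (\<lambda>n. \<bar>(\<Sum>k<n. f (path_shift k x)) - n * (\<integral>x. f x \<partial>P)\<bar> \<le> \<delta> * n) sequentially"
      by eventually_elim (simp add: abs_le_iff algebra_simps)
  qed
qed

theorem stationary_ergodic_average_tendsto:
  fixes X :: "nat \<Rightarrow> 'a \<Rightarrow> real"
  assumes "prob_space M" and X: "stationary_ergodic M X" and "integrable M (X 0)"
  shows "AE \<omega> in M. (\<lambda>n. (\<Sum>t<n. X t \<omega>) / n) \<longlonglongrightarrow> (\<integral>\<omega>. X 0 \<omega> \<partial>M)"
proof -
  interpret prob_space M by fact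
  have [measurable]: "X t \<in> borel_measurable M" for t
    using X by (simp add: stationary_ergodic_def stationary_process_def)
  define path where "path \<omega> = (\<lambda>t. X t \<omega>)" for \<omega>
  have [measurable]: "path \<in> M \<rightarrow>\<^sub>M path_space"
    unfolding path_def by (rule measurable_PiM_single') (auto simp: space_PiM)
  define P where "P = distr M path_space path"
  have sets_P: "sets P = sets path_space" and "prob_space P"
    by (simp_all add: P_def prob_space_distr)
  have "distr P path_space (path_shift 1) = distr M path_space (\<lambda>\<omega> t. X (t + 1) \<omega>)"
    unfolding P_def by (subst distr_distr) (auto simp: comp_def path_def path_shift_def)
  also have "\<dots> = P"
    using X unfolding P_def path_def stationary_ergodic_def stationary_process_def by blast
  finally have inv: "shift_invariant P" by (simp add: shift_invariant_def)
  have "measure P A \<in> {0, 1}"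
    if A: "A \<in> sets path_space" "\<forall>x. x \<in> A \<longleftrightarrow> path_shift 1 x \<in> A" for A
  proof -
    have "measure P A = measure M {\<omega> \<in> space M. (\<lambda>t. X t \<omega>) \<in> A}"
      using A(1) by (simp add: P_def measure_distr path_def vimage_def Int_def conj_commute)
    moreover have "\<forall>x. x \<in> A \<longleftrightarrow> (\<lambda>t. x (Suc t)) \<in> A" using A(2) by (simp add: path_shift_def)
    ultimately show ?thesis
      using X A(1) unfolding stationary_ergodic_def ergodic_process_def by simp
  qed
  then have erg: "shift_ergodic P" by (simp add: shift_ergodic_def)
  have int: "integrable P (\<lambda>x. x 0)" and int_eq: "(\<integral>x. x 0 \<partial>P) = (\<integral>\<omega>. X 0 \<omega> \<partial>M)"
    using assms(3) by (simp_all add: P_def integrable_distr_eq integral_distr path_def)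
  have "AE x in P. (\<lambda>n. (\<Sum>k<n. x k) / n) \<longlonglongrightarrow> (\<integral>\<omega>. X 0 \<omega> \<partial>M)"
    using birkhoff_ergodic[OF sets_P \<open>prob_space P\<close> inv erg int] by (simp add: int_eq path_shift_apply)
  then show ?thesis
    unfolding P_def by (subst (asm) AE_distr_iff) (simp_all add: path_def)
qed

section \<open>A strong law for bounded orthogonal sequences\<close>

lemma filterlim_floor_sqrt_at_top: "filterlim floor_sqrt at_top sequentially"
  unfolding filterlim_at_top
proof
  fix Z :: nat
  show "eventually (\<lambda>n. Z \<le> floor_sqrt n) sequentially"
    using eventually_ge_at_top[of "Z\<^sup>2"] by eventually_elim (rule le_floor_sqrtI)
qed

lemma average_tendsto_zero_from_squares:
  fixes S :: "nat \<Rightarrow> real"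
  assumes increment: "\<And>n. \<bar>S (Suc n) - S n\<bar> \<le> 1"
    and squares: "(\<lambda>s. S (s\<^sup>2) / s\<^sup>2) \<longlonglongrightarrow> 0"
  shows "(\<lambda>n. S n / n) \<longlonglongrightarrow> 0"
proof (rule Lim_null_comparison)
  define g where "g s = \<bar>S (s\<^sup>2) / s\<^sup>2\<bar> + 2 / s" for s :: nat
  have "(\<lambda>s. 2 / real s) \<longlonglongrightarrow> 0"
    by (intro tendsto_divide_0[OF tendsto_const] filterlim_at_top_imp_at_infinity
        filterlim_real_sequentially)
  then have "g \<longlonglongrightarrow> 0 + 0"
    unfolding g_def using squares by (intro tendsto_add tendsto_rabs_zero)
  then show "(\<lambda>n. g (floor_sqrt n)) \<longlonglongrightarrow> 0"
    using filterlim_compose[OF _ filterlim_floor_sqrt_at_top] by simp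
  have drift: "\<bar>S n - S m\<bar> \<le> real n - real m" if "m \<le> n" for m n
    using that
  proof (induction n rule: dec_induct)
    case (step n)
    then show ?case using increment[of n] by (simp add: abs_le_iff)
  qed simp
  show "eventually (\<lambda>n. norm (S n / n) \<le> g (floor_sqrt n)) sequentially"
    using eventually_gt_at_top[of 0]
  proof eventually_elim
    case (elim n)
    define s where "s = floor_sqrt n"
    have "s > 0" "s\<^sup>2 \<le> n" "n < (Suc s)\<^sup>2"
      using elim Suc_floor_sqrt_power2_gt[of n] by (simp_all add: s_def)
    have sn1: "real (s\<^sup>2) \<le> n" using \<open>s\<^sup>2 \<le> n\<close> by (simp only: of_nat_le_iff)
    have "n \<le> s\<^sup>2 + 2 * s" using \<open>n < (Suc s)\<^sup>2\<close> by (simp add: power2_eq_square)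
    then have "real n \<le> real (s\<^sup>2 + 2 * s)" by (simp only: of_nat_le_iff)
    then have sn: "real (s\<^sup>2) \<le> n" "real n - real (s\<^sup>2) \<le> 2 * s" using sn1 by simp_all
    have "\<bar>S n\<bar> \<le> \<bar>S (s\<^sup>2)\<bar> + 2 * s"
      using drift[OF \<open>s\<^sup>2 \<le> n\<close>] sn by linarith
    then have "\<bar>S n\<bar> / n \<le> (\<bar>S (s\<^sup>2)\<bar> + 2 * s) / n"
      by (intro divide_right_mono) auto
    also have "\<dots> \<le> (\<bar>S (s\<^sup>2)\<bar> + 2 * s) / s\<^sup>2"
      using sn(1) \<open>s > 0\<close> elim by (intro divide_left_mono) auto
    also have "\<dots> = g s"
      using \<open>s > 0\<close> by (simp add: g_def power2_eq_square field_simps)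
    finally show ?case by (simp add: s_def)
  qed
qed

context prob_space
begin

context
  fixes d :: "nat \<Rightarrow> 'a \<Rightarrow> real"
  assumes measurable_d[measurable]: "\<And>t. d t \<in> borel_measurable M"
    and bounded_d: "\<And>t \<omega>. \<bar>d t \<omega>\<bar> \<le> 1"
    and orthogonal_d: "\<And>i j. i < j \<Longrightarrow> (\<integral>\<omega>. d i \<omega> * d j \<omega> \<partial>M) = 0"
begin

lemma integrable_orthogonal_products[simp]: "integrable M (\<lambda>\<omega>. d i \<omega> * d j \<omega>)"
  by (rule integrable_const_bound[where B = 1]) (auto simp: abs_mult intro!: AE_I2 mult_le_one bounded_d)

lemma orthogonal_sum_second_moment: "(\<integral>\<omega>. (\<Sum>t<n. d t \<omega>)\<^sup>2 \<partial>M) \<le> n"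
proof -
  have cross: "(\<integral>\<omega>. d i \<omega> * d j \<omega> \<partial>M) = (if i = j then \<integral>\<omega>. (d i \<omega>)\<^sup>2 \<partial>M else 0)" for i j
    using orthogonal_d[of i j] orthogonal_d[of j i]
    by (cases i j rule: linorder_cases) (simp_all add: power2_eq_square mult.commute)
  have "(\<integral>\<omega>. (\<Sum>t<n. d t \<omega>)\<^sup>2 \<partial>M) = (\<Sum>i<n. \<Sum>j<n. \<integral>\<omega>. d i \<omega> * d j \<omega> \<partial>M)"
    by (simp add: power2_eq_square sum_product Bochner_Integration.integral_sum)
  also have "\<dots> = (\<Sum>i<n. \<integral>\<omega>. (d i \<omega>)\<^sup>2 \<partial>M)"
    by (simp add: cross)
  also have "\<dots> \<le> (\<Sum>i<n. 1)"
  proof (rule sum_mono)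
    fix i
    have "(\<integral>\<omega>. (d i \<omega>)\<^sup>2 \<partial>M) \<le> (\<integral>\<omega>. 1 \<partial>M)"
      using integrable_orthogonal_products[of i i, folded power2_eq_square]
      by (intro integral_mono) (simp_all add: abs_square_le_1 bounded_d)
    then show "(\<integral>\<omega>. (d i \<omega>)\<^sup>2 \<partial>M) \<le> 1" by (simp add: prob_space)
  qed
  finally show ?thesis by simp
qed

text \<open>Chebyshev's inequality along the squares gives a summable bound \<open>1 / (\<epsilon>\<^sup>2 s\<^sup>2)\<close>,
  so Borel--Cantelli applies.\<close>
lemma orthogonal_sum_squares_small:
  fixes \<epsilon> :: real
  assumes "\<epsilon> > 0"
  shows "AE \<omega> in M. eventually (\<lambda>s. \<bar>\<Sum>t<s\<^sup>2. d t \<omega>\<bar> < \<epsilon> * s\<^sup>2) sequentially"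
proof -
  define A where "A s = {\<omega> \<in> space M. (\<epsilon> * s\<^sup>2)\<^sup>2 \<le> (\<Sum>t<s\<^sup>2. d t \<omega>)\<^sup>2}" for s :: nat
  have [measurable]: "A s \<in> sets M" for s unfolding A_def by measurable
  have bound: "measure M (A s) \<le> 1 / \<epsilon>\<^sup>2 * inverse (real s ^ 2)" if "s \<ge> 1" for s
  proof -
    have integrable: "integrable M (\<lambda>\<omega>. (\<Sum>t<s\<^sup>2. d t \<omega>)\<^sup>2)"
      by (simp add: power2_eq_square sum_product)
    have "measure M (A s) \<le> (\<integral>\<omega>. (\<Sum>t<s\<^sup>2. d t \<omega>)\<^sup>2 \<partial>M) / (\<epsilon> * s\<^sup>2)\<^sup>2"
      unfolding A_def using that \<open>\<epsilon> > 0\<close>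
      by (intro integral_Markov_inequality_measure[OF integrable]) auto
    also have "\<dots> \<le> s\<^sup>2 / (\<epsilon> * s\<^sup>2)\<^sup>2"
      using orthogonal_sum_second_moment[of "s\<^sup>2"] by (intro divide_right_mono) auto
    also have "\<dots> = 1 / \<epsilon>\<^sup>2 * inverse (real s ^ 2)"
      using that \<open>\<epsilon> > 0\<close> by (simp add: power2_eq_square field_simps)
    finally show ?thesis .
  qed
  have "summable (\<lambda>s. 1 / \<epsilon>\<^sup>2 * inverse (real s ^ 2))"
    by (intro summable_mult inverse_power_summable) simp
  then have "summable (\<lambda>s. measure M (A s))"
    by (rule summable_comparison_test'[where N = 1]) (rule order.trans[OF _ bound]; simp)
  from borel_cantelli_AE1[OF _ _ this] have "AE \<omega> in M. eventually (\<lambda>s. \<omega> \<in> space M - A s) sequentially"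
    by (simp add: emeasure_eq_measure)
  then show ?thesis
  proof (rule AE_mp[OF _ AE_I2], intro impI)
    fix \<omega> assume "\<omega> \<in> space M" "eventually (\<lambda>s. \<omega> \<in> space M - A s) sequentially"
    then show "eventually (\<lambda>s. \<bar>\<Sum>t<s\<^sup>2. d t \<omega>\<bar> < \<epsilon> * s\<^sup>2) sequentially"
    proof (elim eventually_mono)
      fix s assume "\<omega> \<in> space M - A s"
      then have "\<bar>\<Sum>t<s\<^sup>2. d t \<omega>\<bar>\<^sup>2 < (\<epsilon> * s\<^sup>2)\<^sup>2" by (simp add: A_def not_le)
      then show "\<bar>\<Sum>t<s\<^sup>2. d t \<omega>\<bar> < \<epsilon> * s\<^sup>2"
        by (rule power_less_imp_less_base) (use \<open>\<epsilon> > 0\<close> in simp)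
    qed
  qed
qed

theorem bounded_orthogonal_slln: "AE \<omega> in M. (\<lambda>n. (\<Sum>t<n. d t \<omega>) / n) \<longlonglongrightarrow> 0"
proof -
  have "AE \<omega> in M. eventually (\<lambda>s. \<bar>\<Sum>t<s\<^sup>2. d t \<omega>\<bar> < 1 / Suc m * s\<^sup>2) sequentially" for m :: nat
    by (rule orthogonal_sum_squares_small) simp
  then have "AE \<omega> in M. \<forall>m::nat. eventually (\<lambda>s. \<bar>\<Sum>t<s\<^sup>2. d t \<omega>\<bar> < 1 / Suc m * s\<^sup>2) sequentially"
    by (subst AE_all_countable) (intro allI)
  then show ?thesis
  proof (rule AE_mp[OF _ AE_I2], intro impI)
    fix \<omega> assume H: "\<forall>m::nat. eventually (\<lambda>s. \<bar>\<Sum>t<s\<^sup>2. d t \<omega>\<bar> < 1 / Suc m * s\<^sup>2) sequentially"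
    show "(\<lambda>n. (\<Sum>t<n. d t \<omega>) / n) \<longlonglongrightarrow> 0"
    proof (rule average_tendsto_zero_from_squares)
      show "\<bar>(\<Sum>t<Suc n. d t \<omega>) - (\<Sum>t<n. d t \<omega>)\<bar> \<le> 1" for n
        using bounded_d by simp
      show "(\<lambda>s. (\<Sum>t<s\<^sup>2. d t \<omega>) / s\<^sup>2) \<longlonglongrightarrow> 0"
      proof (rule tendsto_iff[THEN iffD2], intro allI impI)
        fix r :: real assume "r > 0"
        then obtain m :: nat where m: "1 / Suc m < r"
          using nat_approx_posE by blast
        show "eventually (\<lambda>s. dist ((\<Sum>t<s\<^sup>2. d t \<omega>) / s\<^sup>2) 0 < r) sequentially"
          using H[rule_format, of m] eventually_gt_at_top[of 0]
        proof eventually_elim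
          case (elim s)
          then have "\<bar>\<Sum>t<s\<^sup>2. d t \<omega>\<bar> / s\<^sup>2 < 1 / Suc m" by (simp add: field_simps)
          then show ?case using m by (simp add: dist_real_def)
        qed
      qed
    qed
  qed
qed

end

end

section \<open>The threshold policy under independent fading\<close>

definition truncate_path :: "nat \<Rightarrow> (nat \<Rightarrow> real) \<Rightarrow> nat \<Rightarrow> real" where
  "truncate_path j x = (\<lambda>k. if k < j then x k else 0)"

lemma measurable_truncate_path[measurable]: "truncate_path j \<in> path_space \<rightarrow>\<^sub>M path_space"
  unfolding truncate_path_def by (rule measurable_PiM_single') (auto simp: space_PiM)

lemma measurable_ready[measurable]:
  "Measurable.pred ((path_space \<Otimes>\<^sub>M path_space) \<Otimes>\<^sub>M path_space)
     (\<lambda>x. ready PS PD thr (fst (fst x)) (snd (fst x)) (snd x) t)"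
proof -
  let ?B = "\<lambda>t x. batteries PS PD thr (fst (fst x)) (snd (fst x)) (snd x) t"
  have B: "(\<lambda>x. fst (?B t x)) \<in> borel_measurable ((path_space \<Otimes>\<^sub>M path_space) \<Otimes>\<^sub>M path_space) \<and>
        (\<lambda>x. snd (?B t x)) \<in> borel_measurable ((path_space \<Otimes>\<^sub>M path_space) \<Otimes>\<^sub>M path_space)"
  proof (induction t)
    case (Suc t)
    then have [measurable]:
      "(\<lambda>x. fst (?B t x)) \<in> borel_measurable ((path_space \<Otimes>\<^sub>M path_space) \<Otimes>\<^sub>M path_space)"
      "(\<lambda>x. snd (?B t x)) \<in> borel_measurable ((path_space \<Otimes>\<^sub>M path_space) \<Otimes>\<^sub>M path_space)"
      by auto
    show ?case by (simp add: split_beta Let_def)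
  qed simp
  note [measurable] = B[THEN conjunct1] B[THEN conjunct2]
  show ?thesis unfolding ready_def by measurable
qed

lemma (in prob_space) expected_frequency_tendsto:
  fixes P :: "nat \<Rightarrow> 'a \<Rightarrow> bool" and c :: real
  assumes [measurable]: "\<And>t. Measurable.pred M (P t)"
    and lim: "AE \<omega> in M. (\<lambda>n. (\<Sum>t<n. of_bool (P t \<omega>)) / real n) \<longlonglongrightarrow> c"
  shows "(\<lambda>n. (\<Sum>t<n. prob {\<omega> \<in> space M. P t \<omega>}) / real n) \<longlonglongrightarrow> c"
proof -
  define freq where "freq n \<omega> = (\<Sum>t<n. of_bool (P t \<omega>)) / real n" for n \<omega>
  have [measurable]: "freq n \<in> borel_measurable M" for n unfolding freq_def by measurable
  have "freq n \<omega> \<le> 1" for n \<omega>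
  proof -
    have "(\<Sum>t<n. of_bool (P t \<omega>)) \<le> (\<Sum>t<n. 1 :: real)" by (intro sum_mono) simp
    then show ?thesis by (cases "n = 0") (simp_all add: freq_def divide_le_eq_1)
  qed
  moreover have "0 \<le> freq n \<omega>" for n \<omega> by (simp add: freq_def sum_nonneg)
  ultimately have "(\<lambda>n. \<integral>\<omega>. freq n \<omega> \<partial>M) \<longlonglongrightarrow> (\<integral>\<omega>. c \<partial>M)"
    using lim by (intro integral_dominated_convergence[where w = "\<lambda>_. 1"]) (simp_all add: freq_def)
  moreover have "(\<integral>\<omega>. freq n \<omega> \<partial>M) = (\<Sum>t<n. prob {\<omega> \<in> space M. P t \<omega>}) / real n" for n
  proof -
    have "integrable M (\<lambda>\<omega>. of_bool (P t \<omega>) :: real)" for t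
      by (rule integrable_const_bound[where B = 1]) (simp, measurable)
    then have "(\<integral>\<omega>. freq n \<omega> \<partial>M) = (\<Sum>t<n. \<integral>\<omega>. of_bool (P t \<omega>) \<partial>M) / real n"
      unfolding freq_def by (subst Bochner_Integration.integral_sum[symmetric]) auto
    moreover have "(\<integral>\<omega>. of_bool (P t \<omega>) \<partial>M) = prob {\<omega> \<in> space M. P t \<omega>}" for t
      by (subst Bochner_Integration.integral_cong[OF refl, of _ _ "indicator {\<omega> \<in> space M. P t \<omega>}"])
        (auto simp: emeasure_eq_measure)
    ultimately show ?thesis by simp
  qed
  ultimately show ?thesis by (simp add: prob_space)
qed

text \<open>The exponential law has no atoms, so the tail \<open>\<ge>\<close> equals the tail \<open>>\<close>.\<close>
lemma (in prob_space) exponential_distributed_ge: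
  assumes X: "distributed M lborel X (exponential_density 1)" and "0 \<le> a"
  shows "prob {x \<in> space M. a \<le> X x} = exp (- a)"
proof -
  have [measurable]: "X \<in> borel_measurable M"
    using distributed_measurable[OF X] by simp
  have "emeasure M (X -` {a} \<inter> space M) = (\<integral>\<^sup>+x. ennreal (exponential_density 1 x) * indicator {a} x \<partial>lborel)"
    by (rule distributed_emeasure[OF X]) simp
  also have "\<dots> = 0"
    using AE_lborel_singleton[of a] by (subst nn_integral_0_iff_AE) (auto elim!: eventually_mono)
  finally have null: "X -` {a} \<inter> space M \<in> null_sets M" by (auto simp: null_sets_def)
  have "{x \<in> space M. a \<le> X x} = {x \<in> space M. a < X x} \<union> (X -` {a} \<inter> space M)" by auto
  then have "prob {x \<in> space M. a \<le> X x} = prob {x \<in> space M. a < X x}"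
    using measure_Un_null_set[OF _ null, of "{x \<in> space M. a < X x}"] by simp
  also have "\<dots> = exp (- a)"
    using exponential_distributedD_gt[OF X \<open>0 \<le> a\<close>] by simp
  finally show ?thesis .
qed

text \<open>\<open>thr\<close> is the non-outage threshold \<open>(2\<^sup>R - 1) z / P\<^sub>t\<^sub>x\<close> on \<open>|h\<^sub>t|\<^sup>2\<close>, and \<open>q = 1 - p(P\<^sub>t\<^sub>x)\<close>
  is the probability of no outage.\<close>
locale threshold_policy = prob_space M for M :: "'a measure" +
  fixes ES ED g :: "nat \<Rightarrow> 'a \<Rightarrow> real" and PS PD thr q :: real
  assumes measurable_ES[measurable]: "\<And>t. ES t \<in> borel_measurable M"
    and measurable_ED[measurable]: "\<And>t. ED t \<in> borel_measurable M"
    and indep_channel: "indep_vars (\<lambda>_. borel) g UNIV"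
    and indep_energy_channel: "indep_set
           (sigma_sets (space M) {(\<lambda>\<omega>. (\<lambda>t. ES t \<omega>, \<lambda>t. ED t \<omega>)) -` A \<inter> space M
                                  | A. A \<in> sets (path_space \<Otimes>\<^sub>M path_space)})
           (sigma_sets (space M) {(\<lambda>\<omega> t. g t \<omega>) -` A \<inter> space M | A. A \<in> sets path_space})"
    and success_prob: "\<And>t. prob {\<omega> \<in> space M. thr \<le> g t \<omega>} = q"
begin

lemma measurable_g[measurable]: "g t \<in> borel_measurable M"
  using indep_channel by (simp add: indep_vars_def)

definition energy :: "'a \<Rightarrow> (nat \<Rightarrow> real) \<times> (nat \<Rightarrow> real)" where
  "energy \<omega> = (\<lambda>t. ES t \<omega>, \<lambda>t. ED t \<omega>)"

definition channel_before :: "nat \<Rightarrow> 'a \<Rightarrow> nat \<Rightarrow> real" where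
  "channel_before j \<omega> = truncate_path j (\<lambda>t. g t \<omega>)"

definition history :: "nat \<Rightarrow> 'a \<Rightarrow> ((nat \<Rightarrow> real) \<times> (nat \<Rightarrow> real)) \<times> (nat \<Rightarrow> real)" where
  "history j \<omega> = (energy \<omega>, channel_before j \<omega>)"

lemma measurable_energy[measurable]: "energy \<in> M \<rightarrow>\<^sub>M path_space \<Otimes>\<^sub>M path_space"
  unfolding energy_def
  by (intro measurable_Pair; rule measurable_PiM_single') (auto simp: space_PiM)

lemma measurable_channel_path[measurable]: "(\<lambda>\<omega> t. g t \<omega>) \<in> M \<rightarrow>\<^sub>M path_space"
  by (rule measurable_PiM_single') (auto simp: space_PiM)

lemma measurable_channel_before[measurable]: "channel_before j \<in> M \<rightarrow>\<^sub>M path_space"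
  unfolding channel_before_def by measurable

lemma measurable_history[measurable]: "history j \<in> M \<rightarrow>\<^sub>M (path_space \<Otimes>\<^sub>M path_space) \<Otimes>\<^sub>M path_space"
  unfolding history_def by measurable

abbreviation ready_at :: "nat \<Rightarrow> 'a \<Rightarrow> bool" where
  "ready_at t \<omega> \<equiv> ready PS PD thr (\<lambda>s. ES s \<omega>) (\<lambda>s. ED s \<omega>) (\<lambda>s. g s \<omega>) t"

text \<open>The decision in slot \<open>t\<close> only depends on the channel before slot \<open>t\<close>, which
  \<open>history j\<close> retains for \<open>t \<le> j\<close>.\<close>
lemma ready_at_history:
  assumes "t \<le> j"
  shows "ready_at t \<omega> = (\<lambda>x. ready PS PD thr (fst (fst x)) (snd (fst x)) (snd x) t) (history j \<omega>)"
  using batteries_cong[of t "\<lambda>s. g s \<omega>" "channel_before j \<omega>"] assms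
  by (simp add: ready_def history_def energy_def channel_before_def truncate_path_def)

lemma measurable_ready_at[measurable]: "Measurable.pred M (ready_at t)"
  by (subst ready_at_history[OF order.refl, abs_def]) measurable

lemma indep_var_channel_before: "indep_var path_space (channel_before j) path_space (\<lambda>\<omega> _. g j \<omega>)"
proof -
  have "indep_var (Pi\<^sub>M {..<j} (\<lambda>_. borel)) (\<lambda>\<omega>. restrict (\<lambda>i. g i \<omega>) {..<j})
                  (Pi\<^sub>M {j} (\<lambda>_. borel)) (\<lambda>\<omega>. restrict (\<lambda>i. g i \<omega>) {j})"
    by (rule indep_var_restrict[OF indep_channel]) auto
  moreover have "(\<lambda>f k. if k < j then f k else 0) \<in> Pi\<^sub>M {..<j} (\<lambda>_. borel) \<rightarrow>\<^sub>M path_space"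
  proof (rule measurable_PiM_single')
    show "(\<lambda>f. if k < j then f k else 0) \<in> borel_measurable (Pi\<^sub>M {..<j} (\<lambda>_. borel))" for k
      by (cases "k < j") (auto intro!: measurable_component_singleton)
  qed (auto simp: space_PiM)
  moreover have "(\<lambda>f (_::nat). f j) \<in> Pi\<^sub>M {j} (\<lambda>_. borel) \<rightarrow>\<^sub>M path_space"
    by (rule measurable_PiM_single') (auto simp: space_PiM)
  ultimately have "indep_var path_space ((\<lambda>f k. if k < j then f k else 0) \<circ> (\<lambda>\<omega>. restrict (\<lambda>i. g i \<omega>) {..<j}))
                    path_space ((\<lambda>f _. f j) \<circ> (\<lambda>\<omega>. restrict (\<lambda>i. g i \<omega>) {j}))"
    by (rule indep_var_compose)
  moreover have "(\<lambda>f k. if k < j then f k else 0) \<circ> (\<lambda>\<omega>. restrict (\<lambda>i. g i \<omega>) {..<j}) = channel_before j"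
    by (auto simp: channel_before_def truncate_path_def fun_eq_iff)
  moreover have "(\<lambda>f _. f j) \<circ> (\<lambda>\<omega>. restrict (\<lambda>i. g i \<omega>) {j}) = (\<lambda>\<omega> (_::nat). g j \<omega>)"
    by (auto simp: fun_eq_iff)
  ultimately show ?thesis by argo
qed

lemma prob_channel_before_Int:
  assumes "C \<in> sets path_space" "B \<in> sets borel"
  shows "prob (channel_before j -` C \<inter> space M \<inter> (g j -` B \<inter> space M))
       = prob (channel_before j -` C \<inter> space M) * prob (g j -` B \<inter> space M)"
proof -
  have B': "{x :: nat \<Rightarrow> real. x 0 \<in> B} \<in> sets path_space"
    using measurable_sets[OF measurable_component_singleton[of 0 UNIV "\<lambda>_. borel"] assms(2)]
    by (simp add: space_PiM vimage_def)
  show ?thesis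
    using indep_varD[OF indep_var_channel_before assms(1) B'] by (simp add: vimage_def Int_def conj_ac)
qed

definition history_rectangles :: "nat \<Rightarrow> 'a set set" where
  "history_rectangles j = {(energy -` A \<inter> space M) \<inter> (channel_before j -` C \<inter> space M) | A C.
                              A \<in> sets (path_space \<Otimes>\<^sub>M path_space) \<and> C \<in> sets path_space}"

definition channel_events :: "nat \<Rightarrow> 'a set set" where
  "channel_events j = {g j -` B \<inter> space M | B. B \<in> sets borel}"

lemma channel_before_Int_in_channel_sigma:
  assumes "C \<in> sets path_space" "B \<in> sets borel"
  shows "channel_before j -` C \<inter> space M \<inter> (g j -` B \<inter> space M)
           \<in> sigma_sets (space M) {(\<lambda>\<omega> t. g t \<omega>) -` A \<inter> space M | A. A \<in> sets path_space}"
proof (intro sigma_sets.Basic CollectI exI conjI)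
  show "channel_before j -` C \<inter> space M \<inter> (g j -` B \<inter> space M)
      = (\<lambda>\<omega> t. g t \<omega>) -` (truncate_path j -` C \<inter> {x. x j \<in> B}) \<inter> space M"
    by (auto simp: channel_before_def)
  have "{x :: nat \<Rightarrow> real. x j \<in> B} \<in> sets path_space"
    using measurable_sets[OF measurable_component_singleton[of j UNIV "\<lambda>_. borel"] assms(2)]
    by (simp add: space_PiM vimage_def)
  then show "truncate_path j -` C \<inter> {x. x j \<in> B} \<in> sets path_space"
    using measurable_sets[OF measurable_truncate_path assms(1)] by (auto simp: space_PiM)
qed

lemma indep_set_history_rectangles: "indep_set (history_rectangles j) (channel_events j)"
proof (rule indep_setI)
  show "history_rectangles j \<subseteq> events" "channel_events j \<subseteq> events"
    by (auto simp: history_rectangles_def channel_events_def)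
  fix a b assume "a \<in> history_rectangles j" "b \<in> channel_events j"
  then obtain A C B where A: "A \<in> sets (path_space \<Otimes>\<^sub>M path_space)" and C: "C \<in> sets path_space"
    and B: "B \<in> sets borel"
    and ab: "a = (energy -` A \<inter> space M) \<inter> (channel_before j -` C \<inter> space M)" "b = g j -` B \<inter> space M"
    unfolding history_rectangles_def channel_events_def by blast
  let ?e = "energy -` A \<inter> space M" and ?c = "channel_before j -` C \<inter> space M"
  have e: "?e \<in> sigma_sets (space M) {(\<lambda>\<omega>. (\<lambda>t. ES t \<omega>, \<lambda>t. ED t \<omega>)) -` A \<inter> space M
                                  | A. A \<in> sets (path_space \<Otimes>\<^sub>M path_space)}"
    using A by (intro sigma_sets.Basic) (auto simp: energy_def)
  have "prob (a \<inter> b) = prob (?e \<inter> (?c \<inter> b))" by (simp add: ab Int_assoc)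
  also have "\<dots> = prob ?e * prob (?c \<inter> b)"
    using indep_setD[OF indep_energy_channel e channel_before_Int_in_channel_sigma[OF C B]]
    by (simp add: ab)
  also have "\<dots> = prob ?e * prob ?c * prob b"
    using prob_channel_before_Int[OF C B] by (simp add: ab)
  also have "prob ?e * prob ?c = prob a"
    using indep_setD[OF indep_energy_channel e channel_before_Int_in_channel_sigma[OF C, of UNIV]]
    by (simp add: ab)
  finally show "prob (a \<inter> b) = prob a * prob b" .
qed

lemma Int_stable_history_rectangles: "Int_stable (history_rectangles j)"
proof (rule Int_stableI)
  fix a b assume "a \<in> history_rectangles j" "b \<in> history_rectangles j"
  then obtain A C A' C' where "A \<in> sets (path_space \<Otimes>\<^sub>M path_space)" "A' \<in> sets (path_space \<Otimes>\<^sub>M path_space)"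
    "C \<in> sets path_space" "C' \<in> sets path_space"
    "a = (energy -` A \<inter> space M) \<inter> (channel_before j -` C \<inter> space M)"
    "b = (energy -` A' \<inter> space M) \<inter> (channel_before j -` C' \<inter> space M)"
    unfolding history_rectangles_def by blast
  then show "a \<inter> b \<in> history_rectangles j"
    unfolding history_rectangles_def by (intro CollectI exI[of _ "A \<inter> A'"] exI[of _ "C \<inter> C'"]) auto
qed

lemma Int_stable_channel_events: "Int_stable (channel_events j)"
proof (rule Int_stableI)
  fix a b assume "a \<in> channel_events j" "b \<in> channel_events j"
  then obtain B B' where "B \<in> sets borel" "B' \<in> sets borel"
    "a = g j -` B \<inter> space M" "b = g j -` B' \<inter> space M"
    unfolding channel_events_def by blast
  then show "a \<inter> b \<in> channel_events j"
    unfolding channel_events_def by (intro CollectI exI[of _ "B \<inter> B'"]) auto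
qed

lemma history_events_subset:
  "sigma_sets (space M) {history j -` A \<inter> space M | A. A \<in> sets ((path_space \<Otimes>\<^sub>M path_space) \<Otimes>\<^sub>M path_space)}
     \<subseteq> sigma_sets (space M) (history_rectangles j)"
proof (rule sigma_sets_mono, safe)
  let ?R = "{a \<times> b | a b. a \<in> sets (path_space \<Otimes>\<^sub>M path_space) \<and> b \<in> sets path_space}"
  let ?\<Omega> = "space (path_space \<Otimes>\<^sub>M path_space) \<times> space path_space"
  fix S assume "S \<in> sets ((path_space \<Otimes>\<^sub>M path_space) \<Otimes>\<^sub>M path_space)"
  then have "history j -` S \<inter> space M \<in> {history j -` A \<inter> space M | A. A \<in> sigma_sets ?\<Omega> ?R}"
    by (auto simp: sets_pair_measure)
  also have "\<dots> = sigma_sets (space M) {history j -` A \<inter> space M | A. A \<in> ?R}"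
    using measurable_space[OF measurable_history[of j]]
    by (intro sigma_sets_vimage_commute) (auto simp: space_pair_measure)
  also have "\<dots> \<subseteq> sigma_sets (space M) (history_rectangles j)"
    by (rule sigma_sets_subseteq) (force simp: history_rectangles_def history_def)
  finally show "history j -` S \<inter> space M \<in> sigma_sets (space M) (history_rectangles j)" .
qed

lemma indep_set_history_channel:
  "indep_set
     (sigma_sets (space M) {history j -` A \<inter> space M | A. A \<in> sets ((path_space \<Otimes>\<^sub>M path_space) \<Otimes>\<^sub>M path_space)})
     (sigma_sets (space M) (channel_events j))"
  using indep_set_sigma_sets[OF indep_set_history_rectangles Int_stable_history_rectangles
      Int_stable_channel_events] history_events_subset
  unfolding indep_sets2_eq by blast

lemma integral_history_channel_mult:
  fixes \<phi> :: "((nat \<Rightarrow> real) \<times> (nat \<Rightarrow> real)) \<times> (nat \<Rightarrow> real) \<Rightarrow> real" and \<psi> :: "real \<Rightarrow> real"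
  assumes [measurable]: "\<phi> \<in> borel_measurable ((path_space \<Otimes>\<^sub>M path_space) \<Otimes>\<^sub>M path_space)"
    "\<psi> \<in> borel_measurable borel"
    and bounded: "\<And>x. \<bar>\<phi> x\<bar> \<le> 1" "\<And>y. \<bar>\<psi> y\<bar> \<le> 1"
  shows "(\<integral>\<omega>. \<phi> (history j \<omega>) * \<psi> (g j \<omega>) \<partial>M) = (\<integral>\<omega>. \<phi> (history j \<omega>) \<partial>M) * (\<integral>\<omega>. \<psi> (g j \<omega>) \<partial>M)"
proof (rule indep_var_lebesgue_integral)
  show "integrable M (\<lambda>\<omega>. \<phi> (history j \<omega>))" "integrable M (\<lambda>\<omega>. \<psi> (g j \<omega>))"
    by (auto intro!: integrable_const_bound[where B = 1] bounded)
  have "sigma_sets (space M) {(\<lambda>\<omega>. \<phi> (history j \<omega>)) -` A \<inter> space M | A. A \<in> sets borel}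
      \<subseteq> sigma_sets (space M) {history j -` A \<inter> space M | A. A \<in> sets ((path_space \<Otimes>\<^sub>M path_space) \<Otimes>\<^sub>M path_space)}"
  proof (intro sigma_sets_mono' subsetI, elim CollectE exE conjE)
    fix a A assume "a = (\<lambda>\<omega>. \<phi> (history j \<omega>)) -` A \<inter> space M" "A \<in> sets borel"
    then show "a \<in> {history j -` A \<inter> space M | A. A \<in> sets ((path_space \<Otimes>\<^sub>M path_space) \<Otimes>\<^sub>M path_space)}"
      using measurable_space[OF measurable_history[of j]]
      by (intro CollectI exI[of _ "\<phi> -` A \<inter> space ((path_space \<Otimes>\<^sub>M path_space) \<Otimes>\<^sub>M path_space)"]) auto
  qed
  moreover have "sigma_sets (space M) {(\<lambda>\<omega>. \<psi> (g j \<omega>)) -` A \<inter> space M | A. A \<in> sets borel}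
      \<subseteq> sigma_sets (space M) (channel_events j)"
  proof (intro sigma_sets_mono' subsetI, elim CollectE exE conjE)
    fix a A assume "a = (\<lambda>\<omega>. \<psi> (g j \<omega>)) -` A \<inter> space M" "A \<in> sets borel"
    then show "a \<in> channel_events j" unfolding channel_events_def
      using measurable_sets[OF assms(2)] by (intro CollectI exI[of _ "\<psi> -` A \<inter> space borel"]) auto
  qed
  ultimately have "indep_set
      (sigma_sets (space M) {(\<lambda>\<omega>. \<phi> (history j \<omega>)) -` A \<inter> space M | A. A \<in> sets borel})
      (sigma_sets (space M) {(\<lambda>\<omega>. \<psi> (g j \<omega>)) -` A \<inter> space M | A. A \<in> sets borel})"
    using indep_set_history_channel[of j] unfolding indep_sets2_eq by blast
  then show "indep_var borel (\<lambda>\<omega>. \<phi> (history j \<omega>)) borel (\<lambda>\<omega>. \<psi> (g j \<omega>))"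
    by (simp add: indep_var_eq)
qed

definition service_deviation :: "nat \<Rightarrow> 'a \<Rightarrow> real" where
  "service_deviation t \<omega> = of_bool (ready_at t \<omega>) * (of_bool (thr \<le> g t \<omega>) - q)"

lemma measurable_service_deviation[measurable]: "service_deviation t \<in> borel_measurable M"
  unfolding service_deviation_def by measurable

lemma q_bounds: "0 \<le> q" "q \<le> 1"
  using success_prob[of 0] by auto

lemma service_deviation_bounded: "\<bar>service_deviation t \<omega>\<bar> \<le> 1"
  using q_bounds by (auto simp: service_deviation_def)

text \<open>The product factors as \<open>\<phi> (history j) * \<psi> (g j)\<close> with \<open>\<integral> \<psi> (g j) = 0\<close>, and the channel in
  slot \<open>j\<close> is independent of the history before slot \<open>j\<close>.\<close>
lemma service_deviation_orthogonal:
  assumes "i < j"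
  shows "(\<integral>\<omega>. service_deviation i \<omega> * service_deviation j \<omega> \<partial>M) = 0"
proof -
  define \<phi> where "\<phi> x = of_bool (ready PS PD thr (fst (fst x)) (snd (fst x)) (snd x) i)
      * (of_bool (thr \<le> snd x i) - q) * of_bool (ready PS PD thr (fst (fst x)) (snd (fst x)) (snd x) j)"
    for x :: "((nat \<Rightarrow> real) \<times> (nat \<Rightarrow> real)) \<times> (nat \<Rightarrow> real)"
  define \<psi> where "\<psi> y = of_bool (thr \<le> y) - q" for y :: real
  have "service_deviation i \<omega> * service_deviation j \<omega> = \<phi> (history j \<omega>) * \<psi> (g j \<omega>)" for \<omega>
    using ready_at_history[of i j \<omega>] ready_at_history[of j j \<omega>] assms
    by (simp add: service_deviation_def \<phi>_def \<psi>_def history_def channel_before_def truncate_path_def)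
  moreover have "(\<integral>\<omega>. \<psi> (g j \<omega>) \<partial>M) = 0"
  proof -
    have "(\<integral>\<omega>. \<psi> (g j \<omega>) \<partial>M) = (\<integral>\<omega>. indicator {\<omega> \<in> space M. thr \<le> g j \<omega>} \<omega> - q \<partial>M)"
      by (intro Bochner_Integration.integral_cong) (auto simp: \<psi>_def)
    also have "\<dots> = prob {\<omega> \<in> space M. thr \<le> g j \<omega>} - q"
    proof -
      have "{\<omega> \<in> space M. thr \<le> g j \<omega>} \<in> events" by measurable
      then show ?thesis
        by (subst Bochner_Integration.integral_diff) (auto simp: prob_space emeasure_eq_measure)
    qed
    finally show ?thesis using success_prob by simp
  qed
  moreover have "(\<integral>\<omega>. \<phi> (history j \<omega>) * \<psi> (g j \<omega>) \<partial>M) = (\<integral>\<omega>. \<phi> (history j \<omega>) \<partial>M) * (\<integral>\<omega>. \<psi> (g j \<omega>) \<partial>M)"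
    using q_bounds by (intro integral_history_channel_mult) (auto simp: \<phi>_def \<psi>_def)
  ultimately show ?thesis by simp
qed

lemma transmissions_average_AE:
  "AE \<omega> in M. (\<lambda>n. (transmissions PS PD thr (\<lambda>s. ES s \<omega>) (\<lambda>s. ED s \<omega>) (\<lambda>s. g s \<omega>) n
                     - q * (\<Sum>t<n. of_bool (ready_at t \<omega>))) / n) \<longlonglongrightarrow> 0"
proof -
  have "AE \<omega> in M. (\<lambda>n. (\<Sum>t<n. service_deviation t \<omega>) / n) \<longlonglongrightarrow> 0"
    by (rule bounded_orthogonal_slln)
      (simp_all add: service_deviation_bounded service_deviation_orthogonal)
  moreover have "(\<Sum>t<n. service_deviation t \<omega>) = transmissions PS PD thr (\<lambda>s. ES s \<omega>) (\<lambda>s. ED s \<omega>) (\<lambda>s. g s \<omega>) n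
                     - q * (\<Sum>t<n. of_bool (ready_at t \<omega>))" for n \<omega>
  proof -
    have "service_deviation t \<omega> = of_bool (ready_at t \<omega> \<and> thr \<le> g t \<omega>) - q * of_bool (ready_at t \<omega>)" for t
      by (cases "ready_at t \<omega>"; cases "thr \<le> g t \<omega>") (simp_all add: service_deviation_def)
    then show ?thesis by (simp add: transmissions_def sum_subtractf sum_distrib_left)
  qed
  ultimately show ?thesis by simp
qed

theorem expected_ready_frequency:
  assumes ES: "\<And>t \<omega>. \<omega> \<in> space M \<Longrightarrow> 0 \<le> ES t \<omega>" and ED: "\<And>t \<omega>. \<omega> \<in> space M \<Longrightarrow> 0 \<le> ED t \<omega>"
    and "PS > 0" "PD > 0" "q > 0"
    and lim_ES: "AE \<omega> in M. (\<lambda>n. (\<Sum>t<n. ES t \<omega>) / n) \<longlonglongrightarrow> lS"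
    and lim_ED: "AE \<omega> in M. (\<lambda>n. (\<Sum>t<n. ED t \<omega>) / n) \<longlonglongrightarrow> lD"
  shows "(\<lambda>n. (\<Sum>t<n. prob {\<omega> \<in> space M. ready_at t \<omega>}) / n)
           \<longlonglongrightarrow> min 1 (min (lS / (q * PS)) (lD / (q * PD)))"
proof (rule expected_frequency_tendsto)
  show "AE \<omega> in M. (\<lambda>n. (\<Sum>t<n. of_bool (ready_at t \<omega>)) / n)
      \<longlonglongrightarrow> min 1 (min (lS / (q * PS)) (lD / (q * PD)))"
    using AE_space lim_ES lim_ED transmissions_average_AE
  proof eventually_elim
    case (elim \<omega>)
    then show ?case
      using ES ED \<open>PS > 0\<close> \<open>PD > 0\<close> \<open>q > 0\<close> by (intro ready_frequency_limit) auto
  qed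
qed simp

end

theorem corollary3:
  fixes M :: "'a measure"
    and ES ED g :: "nat \<Rightarrow> 'a \<Rightarrow> real"
    and lamS lamD R z \<alpha> PCS PS PD :: real
  assumes "prob_space M"
    and "stationary_ergodic M ES" and "stationary_ergodic M ED"
    and "\<And>t \<omega>. \<omega> \<in> space M \<Longrightarrow> ES t \<omega> \<ge> 0"
    and "\<And>t \<omega>. \<omega> \<in> space M \<Longrightarrow> ED t \<omega> \<ge> 0"
    and "integrable M (ES 0)" and "integral\<^sup>L M (ES 0) = lamS" and "lamS > 0"
    and "integrable M (ED 0)" and "integral\<^sup>L M (ED 0) = lamD" and "lamD > 0"
    and "prob_space.indep_vars M (\<lambda>_. borel) g UNIV"
    and "\<And>t. distributed M lborel (g t) (exponential_density 1)"
    and "prob_space.indep_set M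
           (sigma_sets (space M) {(\<lambda>\<omega>. (\<lambda>t. ES t \<omega>, \<lambda>t. ED t \<omega>)) -` A \<inter> space M
                                  | A. A \<in> sets (path_space \<Otimes>\<^sub>M path_space)})
           (sigma_sets (space M) {(\<lambda>\<omega> t. g t \<omega>) -` A \<inter> space M | A. A \<in> sets path_space})"
    and "R > 0" and "z > 0" and "\<alpha> > 0" and "PCS \<ge> 0" and "PS > PCS" and "PD > 0"
  shows "(\<lambda>n. (\<Sum>t<n. measure M {\<omega> \<in> space M.
             let B = batteries PS PD ((2 powr R - 1) * z / tx_power PS PCS \<alpha>)
                       (\<lambda>s. ES s \<omega>) (\<lambda>s. ED s \<omega>) (\<lambda>s. g s \<omega>) t
             in fst B \<ge> PS \<and> snd B \<ge> PD}) / real n)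
         \<longlonglongrightarrow> min 1 (min (lamS / ((1 - outage_prob R z (tx_power PS PCS \<alpha>)) * PS))
                           (lamD / ((1 - outage_prob R z (tx_power PS PCS \<alpha>)) * PD)))"
proof -
  interpret prob_space M by fact
  define thr where "thr = (2 powr R - 1) * z / tx_power PS PCS \<alpha>"
  define q where "q = 1 - outage_prob R z (tx_power PS PCS \<alpha>)"
  have "0 < tx_power PS PCS \<alpha>" "1 < 2 powr R"
    using assms by (simp_all add: tx_power_def gr_one_powr)
  then have "0 \<le> thr" using \<open>z > 0\<close> by (simp add: thr_def)
  have q: "q = exp (- thr)" by (simp add: q_def thr_def outage_prob_def)
  have [measurable]: "ES t \<in> borel_measurable M" "ED t \<in> borel_measurable M" for t
    using assms(2,3) by (simp_all add: stationary_ergodic_def stationary_process_def)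
  interpret threshold_policy M ES ED g PS PD thr q
    using assms(12,13,14) exponential_distributed_ge[OF _ \<open>0 \<le> thr\<close>] by unfold_locales (simp_all add: q)
  have "(\<lambda>n. (\<Sum>t<n. prob {\<omega> \<in> space M. ready_at t \<omega>}) / n)
      \<longlonglongrightarrow> min 1 (min (lamS / (q * PS)) (lamD / (q * PD)))"
    using assms stationary_ergodic_average_tendsto[OF assms(1,2,6)]
      stationary_ergodic_average_tendsto[OF assms(1,3,9)]
    by (intro expected_ready_frequency) (auto simp: q)
  then show ?thesis by (simp add: thr_def q_def ready_def Let_def)
qed

end
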